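(* Let $\mathcal T$ be a type theory. (1) If $B\vdash^{\mathcal T}_{\equiv}\Delta_1:\sigma$ and $\Delta_1\to^\parallel\Delta_2$, then $B\vdash^{\mathcal T}_{\equiv}\Delta_2:\sigma$. (2) For $\mathcal R\in\{=_\beta,=_{\beta\eta}\}$: if $B\vdash^{\mathcal T}_{\mathcal R}\Delta_1:\sigma$ and $\Delta_1\to\Delta_2$, then $B\vdash^{\mathcal T}_{\mathcal R}\Delta_2:\sigma$.
   Context: Type atoms: a set $\mathbb{A}$ of symbols; $\omega$ denotes a distinguished atom (the universal type). Intersection types over $\mathbb A$: $\sigma::= a\mid\sigma\to\sigma\mid\sigma\cap\sigma$ ($a\in\mathbb A$). An intersection type theory $\mathcal T$ over $\mathbb A$ is a set of inequalities $\sigma\le\tau$ (written $\sigma\le_{\mathcal T}\tau$) closed under (refl) $\sigma\le\sigma$; (incl) $\sigma\cap\tau\le\sigma$ and $\sigma\cap\tau\le\tau$; (glb) $\rho\le\sigma$ and $\rho\le\tau$ imply $\rho\le\sigma\cap\tau$; (trans) $\sigma\le\tau$ and $\tau\le\rho$ imply $\sigma\le\rho$. $\Delta$-terms: $\Delta::=u_\Delta\mid x\mid\lambda x{:}\sigma.\Delta\mid\Delta\,\Delta\mid\langle\Delta,\Delta\rangle\mid pr_1\Delta\mid pr_2\Delta\mid\Delta^\sigma$, where for every (not necessarily typable) $\Delta$-term $\Delta$ there is a constant $u_\Delta$. The essence $\|\Delta\|$ is the pure $\lambda$-term defined by $\|x\|=x$, $\|u_\Delta\|=\|\Delta\|$,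 $\|\Delta^\sigma\|=\|\Delta\|$, $\|\lambda x{:}\sigma.\Delta\|=\lambda x.\|\Delta\|$, $\|\Delta_1\Delta_2\|=\|\Delta_1\|\,\|\Delta_2\|$, $\|\langle\Delta_1,\Delta_2\rangle\|=\|\Delta_1\|$, $\|pr_i\Delta\|=\|\Delta\|$. Let $\mathcal R$ be one of $\equiv$ (syntactic identity up to $\alpha$), $=_\beta$, $=_{\beta\eta}$ on pure $\lambda$-terms. A basis $B$ is a finite set of declarations $x{:}\sigma$ with distinct variables. The typed system $\Delta^{\mathcal T}_{\mathcal R}$ derives $B\vdash^{\mathcal T}_{\mathcal R}\Delta:\sigma$ by: (top) $B\vdash u_\Delta:\omega$ if $\omega\in\mathbb A$; (ax) $B\vdash x:\sigma$ if $x{:}\sigma\in B$; ($\to$I) from $B,x{:}\sigma\vdash\Delta:\tau$ infer $B\vdash\lambda x{:}\sigma.\Delta:\sigma\to\tau$; ($\to$E) from $B\vdash\Delta_1:\sigma\to\tau$ and $B\vdash\Delta_2:\sigma$ infer $B\vdash\Delta_1\Delta_2:\tau$; ($\cap$I) from $B\vdash\Delta_1:\sigma$, $B\vdash\Delta_2:\tau$ and $\|\Delta_1\|\mathrel{\mathcal R}\|\Delta_2\|$ infer $B\vdash\langle\Delta_1,\Delta_2\rangle:\sigma\cap\tau$; ($\cap$E$_1$) from $B\vdash\Delta:\sigma\cap\tau$ infer $B\vdash pr_1\Delta:\sigma$; ($\cap$E$_2$) from $B\vdash\Delta:\sigma\cap\tau$ infer $B\vdash pr_2\Delta:\tau$;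 ($\le_{\mathcal T}$) from $B\vdash\Delta:\sigma$ and $\sigma\le_{\mathcal T}\tau$ infer $B\vdash\Delta^\tau:\tau$. Substitution $\Delta_1[\Delta_2/x]$ is capture-avoiding, with $u_{\Delta_1}[\Delta_2/x]=u_{\Delta_1[\Delta_2/x]}$ and $(\Delta_1^\sigma)[\Delta_2/x]=(\Delta_1[\Delta_2/x])^\sigma$. Notions of reduction: $(\beta)$ $(\lambda x{:}\sigma.\Delta_1)\Delta_2\to\Delta_1[\Delta_2/x]$; $(pr_i)$ $pr_i\langle\Delta_1,\Delta_2\rangle\to\Delta_i$ ($i=1,2$). ($(\lambda x{:}\sigma.\Delta_1)^\tau\Delta_2$ is not a redex.) $\to$ denotes the contextual closure of $(\beta)$ and $(pr_i)$, where no reduction is performed inside the index $\Delta$ of a constant $u_\Delta$. The synchronous reduction $\to^\parallel$ is defined as the contextual closure of $(\beta)$ and $(pr_i)$ except that a strong pair reduces only by the rule: $\langle\Delta_1,\Delta_2\rangle\to^\parallel\langle\Delta_1',\Delta_2'\rangle$ whenever $\Delta_1\to^\parallel\Delta_1'$, $\Delta_2\to^\parallel\Delta_2'$ and $\|\Delta_1'\|\equiv\|\Delta_2'\|$. *)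

theory Defs
  imports Main
begin

datatype 'a ty = Atom 'a | Arr "'a ty" "'a ty" | Inter "'a ty" "'a ty"

definition type_theory :: "('a ty \<times> 'a ty) set \<Rightarrow> bool" where
  "type_theory T \<longleftrightarrow>
     (\<forall>s. (s, s) \<in> T) \<and>
     (\<forall>s t. (Inter s t, s) \<in> T \<and> (Inter s t, t) \<in> T) \<and>
     (\<forall>r s t. (r, s) \<in> T \<longrightarrow> (r, t) \<in> T \<longrightarrow> (r, Inter s t) \<in> T) \<and>
     (\<forall>s t r. (s, t) \<in> T \<longrightarrow> (t, r) \<in> T \<longrightarrow> (s, r) \<in> T)"

section \<open>Pure lambda terms (de Bruijn, so syntactic identity = alpha-equivalence)\<close>

datatype lterm = LVar nat | LApp lterm lterm | LAbs lterm

primrec llift :: "lterm \<Rightarrow> nat \<Rightarrow> lterm" where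
  "llift (LVar i) k = (if i < k then LVar i else LVar (Suc i))"
| "llift (LApp s t) k = LApp (llift s k) (llift t k)"
| "llift (LAbs s) k = LAbs (llift s (Suc k))"

primrec lsubst :: "lterm \<Rightarrow> lterm \<Rightarrow> nat \<Rightarrow> lterm" where
  "lsubst (LVar i) s k = (if k < i then LVar (i - 1) else if i = k then s else LVar i)"
| "lsubst (LApp t u) s k = LApp (lsubst t s k) (lsubst u s k)"
| "lsubst (LAbs t) s k = LAbs (lsubst t (llift s 0) (Suc k))"

inductive lbeta :: "lterm \<Rightarrow> lterm \<Rightarrow> bool" where
  beta: "lbeta (LApp (LAbs s) t) (lsubst s t 0)"
| appL: "lbeta s t \<Longrightarrow> lbeta (LApp s u) (LApp t u)"
| appR: "lbeta s t \<Longrightarrow> lbeta (LApp u s) (LApp u t)"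
| abs: "lbeta s t \<Longrightarrow> lbeta (LAbs s) (LAbs t)"

inductive lbetaeta :: "lterm \<Rightarrow> lterm \<Rightarrow> bool" where
  beta: "lbetaeta (LApp (LAbs s) t) (lsubst s t 0)"
| eta: "lbetaeta (LAbs (LApp (llift s 0) (LVar 0))) s"
| appL: "lbetaeta s t \<Longrightarrow> lbetaeta (LApp s u) (LApp t u)"
| appR: "lbetaeta s t \<Longrightarrow> lbetaeta (LApp u s) (LApp u t)"
| abs: "lbetaeta s t \<Longrightarrow> lbetaeta (LAbs s) (LAbs t)"

definition syn_eq :: "lterm \<Rightarrow> lterm \<Rightarrow> bool" where
  "syn_eq s t \<longleftrightarrow> s = t"

definition beta_eq :: "lterm \<Rightarrow> lterm \<Rightarrow> bool" where
  "beta_eq = equivclp lbeta"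

definition betaeta_eq :: "lterm \<Rightarrow> lterm \<Rightarrow> bool" where
  "betaeta_eq = equivclp lbetaeta"

datatype 'a dterm =
    U "'a dterm"
  | Var nat
  | Lam "'a ty" "'a dterm"
  | App "'a dterm" "'a dterm"
  | Pair "'a dterm" "'a dterm"
  | Pr1 "'a dterm"
  | Pr2 "'a dterm"
  | Coe "'a dterm" "'a ty"

primrec essence :: "'a dterm \<Rightarrow> lterm" where
  "essence (U d) = essence d"
| "essence (Var i) = LVar i"
| "essence (Lam s d) = LAbs (essence d)"
| "essence (App d e) = LApp (essence d) (essence e)"
| "essence (Pair d e) = essence d"
| "essence (Pr1 d) = essence d"
| "essence (Pr2 d) = essence d"
| "essence (Coe d s) = essence d"

primrec dlift :: "'a dterm \<Rightarrow> nat \<Rightarrow> 'a dterm" where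
  "dlift (U d) k = U (dlift d k)"
| "dlift (Var i) k = (if i < k then Var i else Var (Suc i))"
| "dlift (Lam s d) k = Lam s (dlift d (Suc k))"
| "dlift (App d e) k = App (dlift d k) (dlift e k)"
| "dlift (Pair d e) k = Pair (dlift d k) (dlift e k)"
| "dlift (Pr1 d) k = Pr1 (dlift d k)"
| "dlift (Pr2 d) k = Pr2 (dlift d k)"
| "dlift (Coe d s) k = Coe (dlift d k) s"

primrec dsubst :: "'a dterm \<Rightarrow> 'a dterm \<Rightarrow> nat \<Rightarrow> 'a dterm" where
  "dsubst (U d) e k = U (dsubst d e k)"
| "dsubst (Var i) e k = (if k < i then Var (i - 1) else if i = k then e else Var i)"
| "dsubst (Lam s d) e k = Lam s (dsubst d (dlift e 0) (Suc k))"
| "dsubst (App d d') e k = App (dsubst d e k) (dsubst d' e k)"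
| "dsubst (Pair d d') e k = Pair (dsubst d e k) (dsubst d' e k)"
| "dsubst (Pr1 d) e k = Pr1 (dsubst d e k)"
| "dsubst (Pr2 d) e k = Pr2 (dsubst d e k)"
| "dsubst (Coe d s) e k = Coe (dsubst d e k) s"

text \<open>Bases map variables (de Bruijn indices) to types; \<open>omega = Some w\<close> means
  the atom w is the distinguished universal atom, \<open>None\<close> means no such atom.
  \<open>case_nat (Some s) B\<close> is the basis B extended by x:s for the new bound variable.\<close>
inductive typing :: "'a option \<Rightarrow> ('a ty \<times> 'a ty) set \<Rightarrow> (lterm \<Rightarrow> lterm \<Rightarrow> bool)
    \<Rightarrow> (nat \<Rightarrow> 'a ty option) \<Rightarrow> 'a dterm \<Rightarrow> 'a ty \<Rightarrow> bool"
  for omega T R where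
  top: "omega = Some w \<Longrightarrow> typing omega T R B (U d) (Atom w)"
| ax: "B x = Some s \<Longrightarrow> typing omega T R B (Var x) s"
| arrI: "typing omega T R (case_nat (Some s) B) d t \<Longrightarrow> typing omega T R B (Lam s d) (Arr s t)"
| arrE: "typing omega T R B d1 (Arr s t) \<Longrightarrow> typing omega T R B d2 s \<Longrightarrow>
          typing omega T R B (App d1 d2) t"
| interI: "typing omega T R B d1 s \<Longrightarrow> typing omega T R B d2 t \<Longrightarrow>
          R (essence d1) (essence d2) \<Longrightarrow> typing omega T R B (Pair d1 d2) (Inter s t)"
| interE1: "typing omega T R B d (Inter s t) \<Longrightarrow> typing omega T R B (Pr1 d) s"
| interE2: "typing omega T R B d (Inter s t) \<Longrightarrow> typing omega T R B (Pr2 d) t"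
| leq: "typing omega T R B d s \<Longrightarrow> (s, t) \<in> T \<Longrightarrow> typing omega T R B (Coe d t) t"

section \<open>Reductions (never inside the index of u_Delta)\<close>

inductive dred :: "'a dterm \<Rightarrow> 'a dterm \<Rightarrow> bool" where
  beta: "dred (App (Lam s d1) d2) (dsubst d1 d2 0)"
| pr1: "dred (Pr1 (Pair d1 d2)) d1"
| pr2: "dred (Pr2 (Pair d1 d2)) d2"
| lam: "dred d d' \<Longrightarrow> dred (Lam s d) (Lam s d')"
| appL: "dred d d' \<Longrightarrow> dred (App d e) (App d' e)"
| appR: "dred d d' \<Longrightarrow> dred (App e d) (App e d')"
| pairL: "dred d d' \<Longrightarrow> dred (Pair d e) (Pair d' e)"
| pairR: "dred d d' \<Longrightarrow> dred (Pair e d) (Pair e d')"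
| prj1: "dred d d' \<Longrightarrow> dred (Pr1 d) (Pr1 d')"
| prj2: "dred d d' \<Longrightarrow> dred (Pr2 d) (Pr2 d')"
| coe: "dred d d' \<Longrightarrow> dred (Coe d s) (Coe d' s)"

inductive sred :: "'a dterm \<Rightarrow> 'a dterm \<Rightarrow> bool" where
  beta: "sred (App (Lam s d1) d2) (dsubst d1 d2 0)"
| pr1: "sred (Pr1 (Pair d1 d2)) d1"
| pr2: "sred (Pr2 (Pair d1 d2)) d2"
| lam: "sred d d' \<Longrightarrow> sred (Lam s d) (Lam s d')"
| appL: "sred d d' \<Longrightarrow> sred (App d e) (App d' e)"
| appR: "sred d d' \<Longrightarrow> sred (App e d) (App e d')"
| pair: "sred d1 d1' \<Longrightarrow> sred d2 d2' \<Longrightarrow> essence d1' = essence d2' \<Longrightarrow>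
          sred (Pair d1 d2) (Pair d1' d2')"
| prj1: "sred d d' \<Longrightarrow> sred (Pr1 d) (Pr1 d')"
| prj2: "sred d d' \<Longrightarrow> sred (Pr2 d) (Pr2 d')"
| coe: "sred d d' \<Longrightarrow> sred (Coe d s) (Coe d' s)"

end

theory Submission
  imports Defs
begin

text \<open>The \<open>\<beta>\<close>-redex needs the substitution lemma (and
  weakening for it), which go through whenever the relation R on essences is stable
  under de Bruijn lifting and substitution, since the side condition of (\<open>\<inter>\<close>I) is
  transported along. A strong pair keeps its type only if its reduced components
  still have R-related essences: the synchronous reduction enforces this for \<open>\<equiv>\<close>,
  while for \<open>=\<^sub>\<beta>\<close> and \<open>=\<^sub>\<beta>\<^sub>\<eta>\<close> one reduction step changes the essence of a typed
  term only up to R, as R is a congruence containing \<open>\<beta>\<close>. Neither the axioms of the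
  type theory nor the finiteness of the basis play any role.\<close>

lemma llift_llift:
  "i \<le> k \<Longrightarrow> llift (llift t i) (Suc k) = llift (llift t k) i"
  by (induct t arbitrary: i k) auto

lemma llift_lsubst [simp]:
  "j \<le> i \<Longrightarrow> llift (lsubst t s j) i = lsubst (llift t (Suc i)) (llift s i) j"
  by (induct t arbitrary: i j s) (simp_all add: diff_Suc llift_llift split: nat.split)

lemma llift_lsubst_ge:
  "i \<le> j \<Longrightarrow> llift (lsubst t s j) i = lsubst (llift t i) (llift s i) (Suc j)"
  by (induct t arbitrary: i j s) (auto simp: llift_llift)

lemma lsubst_llift [simp]: "lsubst (llift t k) s k = t"
  by (induct t arbitrary: k s) simp_all

lemma lsubst_lsubst:
  "i \<le> j \<Longrightarrow>
    lsubst (lsubst t (llift v i) (Suc j)) (lsubst u v j) i = lsubst (lsubst t u i) v j"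
  by (induct t arbitrary: i j u v)
    (simp_all add: diff_Suc split: nat.split, simp_all add: llift_llift [symmetric] llift_lsubst_ge)

locale subst_stable =
  fixes R :: "lterm \<Rightarrow> lterm \<Rightarrow> bool"
  assumes llift: "R a b \<Longrightarrow> R (llift a k) (llift b k)"
    and lsubst: "R a b \<Longrightarrow> R (lsubst a c k) (lsubst b c k)"

locale lambda_congruence = subst_stable +
  assumes equivp: "equivp R"
    and beta_conv: "R (LApp (LAbs a) b) (lsubst a b 0)"
    and app_cong: "R a b \<Longrightarrow> R c e \<Longrightarrow> R (LApp a c) (LApp b e)"
    and abs_cong: "R a b \<Longrightarrow> R (LAbs a) (LAbs b)"

lemma subst_stable_syn_eq: "subst_stable syn_eq"
  by unfold_locales (simp_all add: syn_eq_def)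

lemma subst_stable_lbeta: "subst_stable lbeta"
proof
  show "lbeta (llift a k) (llift b k)" if "lbeta a b" for a b k
    using that
  proof (induction arbitrary: k)
    case (beta s t)
    show ?case using lbeta.beta[of "llift s (Suc k)" "llift t k"] by simp
  qed (auto intro: lbeta.intros)
  show "lbeta (lsubst a c k) (lsubst b c k)" if "lbeta a b" for a b c k
    using that
  proof (induction arbitrary: c k)
    case (beta s t)
    show ?case using lbeta.beta[of "lsubst s (llift c 0) (Suc k)" "lsubst t c k"]
      by (simp add: lsubst_lsubst[of 0, simplified])
  qed (auto intro: lbeta.intros)
qed

lemma subst_stable_lbetaeta: "subst_stable lbetaeta"
proof
  show "lbetaeta (llift a k) (llift b k)" if "lbetaeta a b" for a b k
    using that
  proof (induction arbitrary: k)
    case (beta s t)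
    show ?case using lbetaeta.beta[of "llift s (Suc k)" "llift t k"] by simp
  next
    case (eta s)
    show ?case using lbetaeta.eta[of "llift s k"] by (simp add: llift_llift)
  qed (auto intro: lbetaeta.intros)
  show "lbetaeta (lsubst a c k) (lsubst b c k)" if "lbetaeta a b" for a b c k
    using that
  proof (induction arbitrary: c k)
    case (beta s t)
    show ?case using lbetaeta.beta[of "lsubst s (llift c 0) (Suc k)" "lsubst t c k"]
      by (simp add: lsubst_lsubst[of 0, simplified])
  next
    case (eta s)
    show ?case using lbetaeta.eta[of "lsubst s c k"] by (simp add: llift_lsubst_ge[of 0, simplified])
  qed (auto intro: lbetaeta.intros)
qed

lemma equivclp_map:
  assumes "\<And>a b. r a b \<Longrightarrow> r (f a) (f b)" and "equivclp r x y"
  shows "equivclp r (f x) (f y)"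
  using assms(2)
proof (induction rule: equivclp_induct)
  case (step y z)
  then show ?case using assms(1)
    by (metis converse_r_into_equivclp equivclp_trans r_into_equivclp)
qed simp

lemma lambda_congruence_equivclp:
  assumes "subst_stable r"
    and beta: "\<And>a b. r (LApp (LAbs a) b) (lsubst a b 0)"
    and appL: "\<And>a b c. r a b \<Longrightarrow> r (LApp a c) (LApp b c)"
    and appR: "\<And>a b c. r a b \<Longrightarrow> r (LApp c a) (LApp c b)"
    and abs: "\<And>a b. r a b \<Longrightarrow> r (LAbs a) (LAbs b)"
  shows "lambda_congruence (equivclp r)"
proof unfold_locales
  interpret r: subst_stable r by fact
  show "equivclp r (llift a k) (llift b k)" if "equivclp r a b" for a b k
    using that by (rule equivclp_map[rotated]) (rule r.llift)
  show "equivclp r (lsubst a c k) (lsubst b c k)" if "equivclp r a b" for a b c k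
    using that by (rule equivclp_map[rotated]) (rule r.lsubst)
  show "equivclp r (LAbs a) (LAbs b)" if "equivclp r a b" for a b
    using that by (rule equivclp_map[rotated]) (rule abs)
  show "equivclp r (LApp a c) (LApp b e)" if "equivclp r a b" "equivclp r c e" for a b c e
  proof -
    have "equivclp r (LApp a c) (LApp b c)"
      using equivclp_map[of r "\<lambda>x. LApp x c"] appL that(1) by blast
    also have "equivclp r (LApp b c) (LApp b e)"
      using equivclp_map[of r "\<lambda>x. LApp b x"] appR that(2) by blast
    finally show ?thesis .
  qed
qed (auto intro: beta)

lemma lambda_congruence_beta_eq: "lambda_congruence beta_eq"
  unfolding beta_eq_def
  by (rule lambda_congruence_equivclp[OF subst_stable_lbeta]) (auto intro: lbeta.intros)

lemma lambda_congruence_betaeta_eq: "lambda_congruence betaeta_eq"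
  unfolding betaeta_eq_def
  by (rule lambda_congruence_equivclp[OF subst_stable_lbetaeta]) (auto intro: lbetaeta.intros)

lemma essence_dlift [simp]: "essence (dlift d k) = llift (essence d) k"
  by (induct d arbitrary: k) auto

lemma essence_dsubst [simp]: "essence (dsubst d e k) = lsubst (essence d) (essence e) k"
  by (induct d arbitrary: e k) auto

definition basis_ins :: "(nat \<Rightarrow> 'a ty option) \<Rightarrow> nat \<Rightarrow> 'a ty \<Rightarrow> nat \<Rightarrow> 'a ty option" where
  "basis_ins B k s = (\<lambda>i. if i < k then B i else if i = k then Some s else B (i - 1))"

lemma case_nat_basis_ins:
  "case_nat (Some s') (basis_ins B k s) = basis_ins (case_nat (Some s') B) (Suc k) s"
  by (rule ext) (auto simp: basis_ins_def split: nat.split)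

lemma basis_ins_0: "basis_ins B 0 s = case_nat (Some s) B"
  by (rule ext) (auto simp: basis_ins_def split: nat.split)

inductive_cases typing_AppE: "typing omega T R B (App d e) t"
inductive_cases typing_LamE: "typing omega T R B (Lam s d) t"
inductive_cases typing_PairE: "typing omega T R B (Pair d e) t"
inductive_cases typing_Pr1E: "typing omega T R B (Pr1 d) t"
inductive_cases typing_Pr2E: "typing omega T R B (Pr2 d) t"
inductive_cases typing_CoeE: "typing omega T R B (Coe d s) t"

context subst_stable
begin

lemma typing_dlift:
  "typing omega T R B d t \<Longrightarrow> typing omega T R (basis_ins B k s) (dlift d k) t"
proof (induction arbitrary: k rule: typing.induct)
  case (ax B x s)
  then show ?case by (auto intro!: typing.intros simp: basis_ins_def)
next
  case (arrI s B d t)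
  then show ?case by (auto intro!: typing.intros simp: case_nat_basis_ins)
qed (auto intro!: typing.intros llift)

lemma typing_dsubst:
  "typing omega T R (basis_ins B k s) d t \<Longrightarrow> typing omega T R B e s
    \<Longrightarrow> typing omega T R B (dsubst d e k) t"
proof (induction "basis_ins B k s" d t arbitrary: B k e rule: typing.induct)
  case (ax x t)
  then show ?case by (auto intro!: typing.intros simp: basis_ins_def split: if_splits)
next
  case (arrI s' d t)
  have "typing omega T R (case_nat (Some s') B) (dlift e 0) s"
    using typing_dlift[OF arrI.prems, of 0 s'] by (simp add: basis_ins_0)
  then show ?case
    using arrI.hyps(2)[OF case_nat_basis_ins] by (auto intro!: typing.intros)
qed (fastforce intro: typing.intros lsubst)+

lemma typing_beta_reduct:
  assumes "typing omega T R B (App (Lam s d1) d2) t"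
  shows "typing omega T R B (dsubst d1 d2 0) t"
proof -
  obtain s' where lam: "typing omega T R B (Lam s d1) (Arr s' t)" and arg: "typing omega T R B d2 s'"
    using assms by (auto elim: typing_AppE)
  from lam have "s' = s" and body: "typing omega T R (case_nat (Some s) B) d1 t"
    by (auto elim: typing_LamE)
  show ?thesis
    using typing_dsubst[where k = 0] body arg \<open>s' = s\<close> by (simp add: basis_ins_0)
qed

end

lemma typing_sred:
  "sred d d' \<Longrightarrow> typing omega T syn_eq B d t \<Longrightarrow> typing omega T syn_eq B d' t"
proof (induction arbitrary: B t rule: sred.induct)
  case beta
  then show ?case by (rule subst_stable.typing_beta_reduct[OF subst_stable_syn_eq])
next
  case pair
  then show ?case by (auto elim!: typing_PairE intro!: typing.intros simp: syn_eq_def)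
qed (auto elim!: typing_LamE typing_AppE typing_Pr1E typing_Pr2E typing_PairE typing_CoeE
       intro: typing.intros)

context lambda_congruence
begin

lemma R_refl: "R a a"
  using equivp by (simp add: equivp_reflp)

lemma R_sym: "R a b \<Longrightarrow> R b a"
  using equivp by (rule equivp_symp)

lemma R_trans: "R a b \<Longrightarrow> R b c \<Longrightarrow> R a c"
  using equivp by (rule equivp_transp)

text \<open>Typing is needed here: \<open>Pr2 (Pair d1 d2)\<close> has the essence of \<open>d1\<close> but reduces
  to \<open>d2\<close>, whose essence is R-related to it only by the premise of (\<open>\<inter>\<close>I).\<close>
lemma dred_essence:
  "dred d d' \<Longrightarrow> typing omega T R B d t \<Longrightarrow> R (essence d) (essence d')"
proof (induction arbitrary: B t rule: dred.induct)
  case beta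
  show ?case by (simp add: beta_conv)
qed (auto elim!: typing_LamE typing_AppE typing_Pr1E typing_Pr2E typing_PairE typing_CoeE
       intro: app_cong abs_cong R_refl)

lemma typing_dred:
  "dred d d' \<Longrightarrow> typing omega T R B d t \<Longrightarrow> typing omega T R B d' t"
proof (induction arbitrary: B t rule: dred.induct)
  case beta
  then show ?case by (rule typing_beta_reduct)
next
  case (pairL d d' e)
  from pairL.prems obtain s1 t1 where "t = Inter s1 t1" and "typing omega T R B d s1"
    and "typing omega T R B e t1" and "R (essence d) (essence e)"
    by (auto elim: typing_PairE)
  moreover from \<open>typing omega T R B d s1\<close> have "R (essence d) (essence d')"
    by (rule dred_essence[OF pairL.hyps])
  ultimately show ?case
    using pairL.IH by (auto intro!: typing.intros intro: R_sym R_trans)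
next
  case (pairR e e' d)
  from pairR.prems obtain s1 t1 where "t = Inter s1 t1" and "typing omega T R B d s1"
    and "typing omega T R B e t1" and "R (essence d) (essence e)"
    by (auto elim: typing_PairE)
  moreover from \<open>typing omega T R B e t1\<close> have "R (essence e) (essence e')"
    by (rule dred_essence[OF pairR.hyps])
  ultimately show ?case
    using pairR.IH by (auto intro!: typing.intros intro: R_trans)
qed (auto elim!: typing_LamE typing_AppE typing_Pr1E typing_Pr2E typing_PairE typing_CoeE
       intro: typing.intros)

end

theorem mainTheorem10:
  fixes omega :: "'a option" and T :: "('a ty \<times> 'a ty) set"
  assumes "type_theory T"
  shows "(\<forall>B d1 d2 s. finite (dom B) \<longrightarrow> typing omega T syn_eq B d1 s \<longrightarrow> sred d1 d2
            \<longrightarrow> typing omega T syn_eq B d2 s)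
       \<and> (\<forall>R \<in> {beta_eq, betaeta_eq}. \<forall>B d1 d2 s. finite (dom B) \<longrightarrow> typing omega T R B d1 s
            \<longrightarrow> dred d1 d2 \<longrightarrow> typing omega T R B d2 s)"
proof (intro conjI ballI allI impI)
  fix B d1 d2 s
  assume "typing omega T syn_eq B d1 s" "sred d1 d2"
  then show "typing omega T syn_eq B d2 s" by (blast intro: typing_sred)
next
  fix R B d1 d2 s
  assume "R \<in> {beta_eq, betaeta_eq}" "typing omega T R B d1 s" "dred d1 d2"
  moreover have "lambda_congruence R"
    using \<open>R \<in> {beta_eq, betaeta_eq}\<close> lambda_congruence_beta_eq lambda_congruence_betaeta_eq
    by blast
  ultimately show "typing omega T R B d2 s" by (blast intro: lambda_congruence.typing_dred)
qed

end
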